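(* Let $\vec r:\mathbb{Z}\to\mathbb{R}^2$ be a nondegenerate discrete planar curve whose first and second centroaffine curvatures $\kappa_n,\bar\kappa_n$ are $6$-periodic in $n$. Then $\vec r$ is a convex hexagon with parallel and equi-length opposite sides (i.e. $\vec r$ is closed with period $6$, simple, convex, and $\vec t_{k+3}=-\vec t_k$ for all $k$) if and only if for all $n$ $$\kappa_n>0,\qquad \kappa_n=\kappa_{n+3}=\frac{1}{\bar\kappa_{n+1}}=\frac{1}{\bar\kappa_{n+4}},\qquad \kappa_n\kappa_{n+1}\kappa_{n+2}=1.$$
   Context: A discrete planar curve is a map $\vec r:\mathbb{Z}\to\mathbb{R}^2$; $\vec r_k=\vec r(k)$, $\vec t_k=\vec r_{k+1}-\vec r_k$, $[\vec a,\vec b]$ the $2\times2$ determinant. Nondegenerate: $[\vec t_{k-1},\vec t_k]\ne0$ for all $k$. First and second centroaffine curvatures: $\kappa_k=\frac{[\vec t_k,\vec t_{k+1}]}{[\vec t_{k-1},\vec t_k]}$, $\bar\kappa_k=\frac{[\vec t_{k-1},\vec t_{k+1}]}{[\vec t_{k-1},\vec t_k]}$. Closed with period $q$: $\vec r(k+q)=\vec r(k)$ for all $k$, $q$ minimal. Extend $\vec r$ to $\mathbb{R}$ by linear interpolation on each $[k,k+1]$; a closed curve is simple if this map is injective on $[k,k+q)$. Convex: for each line through $\vec r_k,\vec r_{k+1}$, all vertices lie in one closed half-plane bounded by it. *)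

theory Defs
  imports "HOL-Analysis.Analysis"
begin

type_synonym curve = "int \<Rightarrow> real \<times> real"

definition det2 :: "real \<times> real \<Rightarrow> real \<times> real \<Rightarrow> real" where
  "det2 a b = fst a * snd b - snd a * fst b"

definition tang :: "curve \<Rightarrow> int \<Rightarrow> real \<times> real" where
  "tang r k = r (k + 1) - r k"

definition nondegenerate :: "curve \<Rightarrow> bool" where
  "nondegenerate r \<longleftrightarrow> (\<forall>k. det2 (tang r (k - 1)) (tang r k) \<noteq> 0)"

definition kappa :: "curve \<Rightarrow> int \<Rightarrow> real" where
  "kappa r k = det2 (tang r k) (tang r (k + 1)) / det2 (tang r (k - 1)) (tang r k)"

definition kappabar :: "curve \<Rightarrow> int \<Rightarrow> real" where
  "kappabar r k = det2 (tang r (k - 1)) (tang r (k + 1)) / det2 (tang r (k - 1)) (tang r k)"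

definition closed_period :: "curve \<Rightarrow> int \<Rightarrow> bool" where
  "closed_period r q \<longleftrightarrow> q > 0 \<and> (\<forall>k. r (k + q) = r k) \<and>
     (\<forall>p. 0 < p \<and> p < q \<longrightarrow> \<not> (\<forall>k. r (k + p) = r k))"

definition interp :: "curve \<Rightarrow> real \<Rightarrow> real \<times> real" where
  "interp r s = r \<lfloor>s\<rfloor> + (s - of_int \<lfloor>s\<rfloor>) *\<^sub>R (r (\<lfloor>s\<rfloor> + 1) - r \<lfloor>s\<rfloor>)"

definition simple_closed :: "curve \<Rightarrow> int \<Rightarrow> bool" where
  "simple_closed r q \<longleftrightarrow> closed_period r q \<and>
     (\<forall>k. inj_on (interp r) {real_of_int k ..< real_of_int k + real_of_int q})"

definition convex_curve :: "curve \<Rightarrow> bool" where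
  "convex_curve r \<longleftrightarrow> (\<forall>k. (\<forall>j. det2 (tang r k) (r j - r k) \<ge> 0) \<or>
                          (\<forall>j. det2 (tang r k) (r j - r k) \<le> 0))"

end

theory Submission
  imports Defs
begin

text \<open>Write D_k = [t_(k-1), t_k]. Then \<kappa>_k = D_(k+1) / D_k telescopes:
  \<kappa>_k \<kappa>_(k+1) \<kappa>_(k+2) = D_(k+3) / D_k and \<kappa>_k \<kappa>bar_(k+1) = [t_k, t_(k+2)] / D_k.
  For an antiperiodic tangent t_(k+3) = -t_k both quotients are 1, and convexity forces D_k and
  D_(k+1) to have the same sign. Conversely, the two identities say that t_(k+3) + t_k has
  zero determinant with the basis t_(k+1), t_(k+2), so the tangent is antiperiodic and the curve
  is a centrally symmetric hexagon. Seen from the edge through r_m, r_(m+1), every point of this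
  hexagon off that edge has determinant against t_m a nonnegative, nonzero combination of
  [t_m, t_(m+1)] = D_(m+1) and [t_m, t_(m+2)] = D_m, which share a sign since \<kappa>_m > 0. So each
  edge leaves the rest of the hexagon strictly on one side, which yields convexity, simplicity
  and minimality of the period at once.\<close>

lemma det2_self [simp]: "det2 a a = 0"
  and det2_zero [simp]: "det2 a 0 = 0" "det2 0 a = 0"
  and det2_add_right [simp]: "det2 a (b + c) = det2 a b + det2 a c"
  and det2_diff_right [simp]: "det2 a (b - c) = det2 a b - det2 a c"
  and det2_minus_right [simp]: "det2 a (- b) = - det2 a b"
  and det2_minus_left [simp]: "det2 (- a) b = - det2 a b"
  and det2_scaleR_right [simp]: "det2 a (u *\<^sub>R b) = u * det2 a b"
  by (simp_all add: det2_def algebra_simps)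

lemma det2_commute: "det2 b a = - det2 a b"
  by (simp add: det2_def)

lemma eq_0_if_det2_eq_0:
  assumes "det2 u v \<noteq> 0" "det2 u x = 0" "det2 v x = 0"
  shows "x = 0"
proof -
  obtain u1 u2 v1 v2 x1 x2 where uvx: "u = (u1, u2)" "v = (v1, v2)" "x = (x1, x2)"
    by (cases u, cases v, cases x) auto
  have d: "u1 * v2 - u2 * v1 \<noteq> 0" "u1 * x2 - u2 * x1 = 0" "v1 * x2 - v2 * x1 = 0"
    using assms by (auto simp: uvx det2_def)
  have "x1 * (u1 * v2 - u2 * v1) = v1 * (u1 * x2 - u2 * x1) - u1 * (v1 * x2 - v2 * x1)"
       "x2 * (u1 * v2 - u2 * v1) = v2 * (u1 * x2 - u2 * x1) - u2 * (v1 * x2 - v2 * x1)"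
    by (simp_all add: algebra_simps)
  with d have "x1 = 0" "x2 = 0" by simp_all
  then show ?thesis by (simp add: uvx zero_prod_def)
qed

lemma curve_add_one: "r (k + 1) = r k + tang r k"
  by (simp add: tang_def)

lemma nondegenerateD:
  assumes "nondegenerate r"
  shows "det2 (tang r (n - 1)) (tang r n) \<noteq> 0" "det2 (tang r n) (tang r (n + 1)) \<noteq> 0"
  using assms[unfolded nondegenerate_def, rule_format, of n]
    assms[unfolded nondegenerate_def, rule_format, of "n + 1"] by simp_all

lemma tang_nonzero: "nondegenerate r \<Longrightarrow> tang r n \<noteq> 0"
  using nondegenerateD(2)[of r n] by auto

lemma kappa_nonzero: "nondegenerate r \<Longrightarrow> kappa r n \<noteq> 0"
  by (simp add: kappa_def nondegenerateD)

lemma kappa_pos_iff: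
  "kappa r n > 0 \<longleftrightarrow> 0 < det2 (tang r n) (tang r (n + 1)) * det2 (tang r (n - 1)) (tang r n)"
  by (simp add: kappa_def zero_less_divide_iff zero_less_mult_iff)

lemma kappa_mult_kappabar:
  assumes "nondegenerate r"
  shows "kappa r n * kappabar r (n + 1) =
    det2 (tang r n) (tang r (n + 2)) / det2 (tang r (n - 1)) (tang r n)"
  using nondegenerateD[OF assms, of n] by (simp add: kappa_def kappabar_def add.assoc)

lemma kappa_prod_three:
  assumes "nondegenerate r"
  shows "kappa r n * kappa r (n + 1) * kappa r (n + 2) =
    det2 (tang r (n + 2)) (tang r (n + 3)) / det2 (tang r (n - 1)) (tang r n)"
proof -
  have "kappa r (n + 1) = det2 (tang r (n + 1)) (tang r (n + 2)) / det2 (tang r n) (tang r (n + 1))"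
       "kappa r (n + 2) = det2 (tang r (n + 2)) (tang r (n + 3)) / det2 (tang r (n + 1)) (tang r (n + 2))"
    by (simp_all add: kappa_def algebra_simps)
  moreover have "kappa r n = det2 (tang r n) (tang r (n + 1)) / det2 (tang r (n - 1)) (tang r n)"
    by (simp add: kappa_def)
  moreover note nondegenerateD[OF assms, of n] nondegenerateD(2)[OF assms, of "n + 1"]
  ultimately show ?thesis
    by (simp add: ac_simps)
qed

lemma kappa_pos_if_convex_curve:
  assumes nd: "nondegenerate r" and cv: "convex_curve r"
  shows "kappa r n > 0"
proof -
  have next_vertex: "det2 (tang r n) (r (n + 2) - r n) = det2 (tang r n) (tang r (n + 1))"
    using curve_add_one[of r n] curve_add_one[of r "n + 1"] by (simp add: add.assoc)
  have prev_vertex: "det2 (tang r n) (r (n - 1) - r n) = det2 (tang r (n - 1)) (tang r n)"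
    using curve_add_one[of r "n - 1"] by (simp add: det2_commute[of "tang r n"])
  from cv have "(det2 (tang r n) (r (n + 2) - r n) \<ge> 0 \<and> det2 (tang r n) (r (n - 1) - r n) \<ge> 0) \<or>
      (det2 (tang r n) (r (n + 2) - r n) \<le> 0 \<and> det2 (tang r n) (r (n - 1) - r n) \<le> 0)"
    unfolding convex_curve_def by blast
  with nondegenerateD[OF nd, of n] show ?thesis
    unfolding kappa_pos_iff next_vertex prev_vertex
    by (auto simp: zero_less_mult_iff order.order_iff_strict)
qed

lemma det2_tang_antiperiodic:
  assumes ap: "\<forall>k. tang r (k + 3) = - tang r k"
  shows "det2 (tang r (n + 2)) (tang r (n + 3)) = det2 (tang r (n - 1)) (tang r n)"
    and "det2 (tang r n) (tang r (n + 2)) = det2 (tang r (n - 1)) (tang r n)"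
proof -
  have "tang r (n + 2) = - tang r (n - 1)" "tang r (n + 3) = - tang r n"
    using ap[rule_format, of "n - 1"] ap by (simp_all add: algebra_simps)
  then show "det2 (tang r (n + 2)) (tang r (n + 3)) = det2 (tang r (n - 1)) (tang r n)"
    and "det2 (tang r n) (tang r (n + 2)) = det2 (tang r (n - 1)) (tang r n)"
    by (simp_all add: det2_commute[of "tang r n"])
qed

lemma antiperiodic_if_det2_tang:
  assumes nd: "nondegenerate r"
    and skip: "\<forall>n. det2 (tang r n) (tang r (n + 2)) = det2 (tang r (n - 1)) (tang r n)"
    and shift: "\<forall>n. det2 (tang r (n + 2)) (tang r (n + 3)) = det2 (tang r (n - 1)) (tang r n)"
  shows "tang r (k + 3) = - tang r k"
proof -
  have "tang r (k + 3) + tang r k = 0"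
  proof (rule eq_0_if_det2_eq_0)
    show "det2 (tang r (k + 1)) (tang r (k + 2)) \<noteq> 0"
      using nondegenerateD(2)[OF nd, of "k + 1"] by (simp add: add.assoc)
    show "det2 (tang r (k + 1)) (tang r (k + 3) + tang r k) = 0"
      using skip[rule_format, of "k + 1"] by (simp add: add.assoc det2_commute[of "tang r (k + 1)"])
    show "det2 (tang r (k + 2)) (tang r (k + 3) + tang r k) = 0"
      using skip[rule_format, of k] shift[rule_format, of k] by (simp add: det2_commute[of "tang r (k + 2)"])
  qed
  then show ?thesis
    by (simp add: eq_neg_iff_add_eq_0)
qed

lemma kappa_conditions_if_antiperiodic:
  assumes nd: "nondegenerate r" and ap: "\<forall>k. tang r (k + 3) = - tang r k"
  shows "kappa r (n + 3) = kappa r n"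
    and "kappa r n * kappabar r (n + 1) = 1"
    and "kappa r n * kappa r (n + 1) * kappa r (n + 2) = 1"
proof -
  note shift = det2_tang_antiperiodic(1)[OF ap]
  show "kappa r (n + 3) = kappa r n"
    using shift[of n] shift[of "n + 1"] by (simp add: kappa_def algebra_simps)
  show "kappa r n * kappabar r (n + 1) = 1"
    using nondegenerateD(1)[OF nd, of n]
    by (simp add: kappa_mult_kappabar[OF nd] det2_tang_antiperiodic(2)[OF ap])
  show "kappa r n * kappa r (n + 1) * kappa r (n + 2) = 1"
    using nondegenerateD(1)[OF nd, of n] by (simp add: kappa_prod_three[OF nd] shift)
qed

lemma antiperiodic_if_kappa_conditions:
  assumes nd: "nondegenerate r"
    and inverse: "\<forall>n. kappa r n = 1 / kappabar r (n + 1)"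
    and prod: "\<forall>n. kappa r n * kappa r (n + 1) * kappa r (n + 2) = 1"
  shows "tang r (k + 3) = - tang r k"
proof (rule antiperiodic_if_det2_tang[OF nd]; intro allI)
  fix n
  have "kappa r n * kappabar r (n + 1) = 1"
    using inverse[rule_format, of n] kappa_nonzero[OF nd, of n] by (auto simp: field_simps)
  then show "det2 (tang r n) (tang r (n + 2)) = det2 (tang r (n - 1)) (tang r n)"
    using nondegenerateD(1)[OF nd, of n] by (simp add: kappa_mult_kappabar[OF nd])
  show "det2 (tang r (n + 2)) (tang r (n + 3)) = det2 (tang r (n - 1)) (tang r n)"
    using prod[rule_format, of n] nondegenerateD(1)[OF nd, of n] by (simp add: kappa_prod_three[OF nd])
qed

lemma antiperiodic_tang_shifts:
  assumes ap: "\<forall>k. tang r (k + 3) = - tang r k"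
  shows "tang r (m + 3) = - tang r m" "tang r (m + 4) = - tang r (m + 1)"
    "tang r (m + 5) = - tang r (m + 2)"
  using ap[rule_format, of m] ap[rule_format, of "m + 1"] ap[rule_format, of "m + 2"]
  by (simp_all add: add.assoc)

lemma antiperiodic_vertices:
  assumes ap: "\<forall>k. tang r (k + 3) = - tang r k"
  shows "r (m + 2) = r m + tang r m + tang r (m + 1)"
    and "r (m + 3) = r m + tang r m + tang r (m + 1) + tang r (m + 2)"
    and "r (m + 4) = r m + tang r (m + 1) + tang r (m + 2)"
    and "r (m + 5) = r m + tang r (m + 2)"
    and "r (m + 6) = r m"
proof -
  have step: "r (m + int (Suc j)) = r (m + int j) + tang r (m + int j)" for j
    using curve_add_one[of r "m + int j"] by (simp add: algebra_simps)
  note t = antiperiodic_tang_shifts[OF ap, of m]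
  note s = step[of 0] step[of 1] step[of 2] step[of 3] step[of 4] step[of 5]
  show "r (m + 2) = r m + tang r m + tang r (m + 1)"
    and "r (m + 3) = r m + tang r m + tang r (m + 1) + tang r (m + 2)"
    and "r (m + 4) = r m + tang r (m + 1) + tang r (m + 2)"
    and "r (m + 5) = r m + tang r (m + 2)"
    and "r (m + 6) = r m"
    using s t by simp_all
qed

lemma antiperiodic_det2_edge_point:
  assumes ap: "\<forall>k. tang r (k + 3) = - tang r k"
    and d: "2 \<le> d" "d \<le> 5" and u: "0 \<le> u" "u < 1"
  obtains \<alpha> \<beta> where "0 \<le> \<alpha>" "0 \<le> \<beta>" "0 < \<alpha> + \<beta>"
    "det2 (tang r m) (r (m + d) + u *\<^sub>R tang r (m + d) - r m) =
       \<alpha> * det2 (tang r m) (tang r (m + 1)) + \<beta> * det2 (tang r m) (tang r (m + 2))"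
proof -
  note t = antiperiodic_tang_shifts[OF ap, of m]
  note v = antiperiodic_vertices[OF ap, of m]
  consider "d = 2" | "d = 3" | "d = 4" | "d = 5"
    using d by linarith
  then show thesis
  proof cases
    case 1
    then show thesis using u v by (intro that[of 1 u]) simp_all
  next
    case 2
    then show thesis using t v by (intro that[of 1 1]) simp_all
  next
    case 3
    then show thesis using u t v by (intro that[of "1 - u" 1]) (simp_all add: algebra_simps)
  next
    case 4
    then show thesis using u t v by (intro that[of 0 "1 - u"]) (simp_all add: algebra_simps)
  qed
qed

lemma antiperiodic_edge_point_strictly_one_side:
  assumes ap: "\<forall>k. tang r (k + 3) = - tang r k" and kpos: "\<forall>n. kappa r n > 0"
    and d: "2 \<le> d" "d \<le> 5" and u: "0 \<le> u" "u < 1"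
  shows "0 < det2 (tang r m) (tang r (m + 1)) *
    det2 (tang r m) (r (m + d) + u *\<^sub>R tang r (m + d) - r m)"
proof -
  define P where "P = det2 (tang r m) (tang r (m + 1))"
  define Q where "Q = det2 (tang r m) (tang r (m + 2))"
  have PQ: "0 < P * Q"
    using kpos[rule_format, of m]
    by (simp add: kappa_pos_iff P_def Q_def det2_tang_antiperiodic(2)[OF ap])
  obtain \<alpha> \<beta> where coeffs: "0 \<le> \<alpha>" "0 \<le> \<beta>" "0 < \<alpha> + \<beta>"
    and det: "det2 (tang r m) (r (m + d) + u *\<^sub>R tang r (m + d) - r m) = \<alpha> * P + \<beta> * Q"
    using antiperiodic_det2_edge_point[OF ap d u] unfolding P_def Q_def .
  have "0 < P * P" using PQ by (auto simp: zero_less_mult_iff)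
  then have "0 < \<alpha> * (P * P) + \<beta> * (P * Q)"
    using PQ coeffs by (cases "\<alpha> = 0") (simp_all add: add_pos_nonneg)
  then show ?thesis
    unfolding P_def [symmetric] det by (simp add: algebra_simps)
qed

lemma periodic_mult:
  fixes f :: "int \<Rightarrow> 'a"
  assumes "\<forall>k. f (k + p) = f k"
  shows "f (k + p * q) = f k"
proof (induction q arbitrary: k rule: int_induct[where k = 0])
  case (step1 i)
  then show ?case using assms[rule_format, of "k + p * i"] by (simp add: algebra_simps)
next
  case (step2 i)
  then show ?case using assms[rule_format, of "k + p * (i - 1)"] by (simp add: algebra_simps)
qed simp

lemma closed_period_6_if_antiperiodic:
  assumes nd: "nondegenerate r" and ap: "\<forall>k. tang r (k + 3) = - tang r k"
    and kpos: "\<forall>n. kappa r n > 0"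
  shows "closed_period r 6"
  unfolding closed_period_def
proof (intro conjI allI impI)
  show "r (k + 6) = r k" for k
    using antiperiodic_vertices(5)[OF ap] .
  fix p :: int
  assume p: "0 < p \<and> p < 6"
  show "\<not> (\<forall>k. r (k + p) = r k)"
  proof
    assume per: "\<forall>k. r (k + p) = r k"
    show False
    proof (cases "p = 1")
      case True
      then show False using per[rule_format, of 0] tang_nonzero[OF nd, of 0] by (simp add: tang_def)
    next
      case False
      then show False
        using per[rule_format, of 0] antiperiodic_edge_point_strictly_one_side[OF ap kpos, of p 0 0] p
        by simp
    qed
  qed
qed simp

lemma antiperiodic_edge_points_eq:
  assumes nd: "nondegenerate r" and ap: "\<forall>k. tang r (k + 3) = - tang r k"
    and kpos: "\<forall>n. kappa r n > 0"
    and d: "0 \<le> d" "d \<le> 5" and u: "0 \<le> u" "u < 1" and u': "0 \<le> u'" "u' < 1"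
    and eq: "r m + u *\<^sub>R tang r m = r (m + d) + u' *\<^sub>R tang r (m + d)"
  shows "d = 0 \<and> u = u'"
proof -
  have diff: "r (m + d) + u' *\<^sub>R tang r (m + d) - r m = u *\<^sub>R tang r m"
    using eq by (simp add: algebra_simps)
  consider "d = 0" | "d = 1" | "2 \<le> d"
    using d by linarith
  then show ?thesis
  proof cases
    case 1
    then show ?thesis using eq tang_nonzero[OF nd, of m] by simp
  next
    case 2
    then have "u' * det2 (tang r m) (tang r (m + 1)) = 0"
      using arg_cong[OF diff, of "det2 (tang r m)"] by (simp add: curve_add_one)
    then have "u' = 0"
      using nondegenerateD(2)[OF nd, of m] by simp
    then have "tang r m = u *\<^sub>R tang r m"
      using diff 2 by (simp add: tang_def)
    then have "u = 1"
      using tang_nonzero[OF nd, of m] by (metis scaleR_cancel_right scaleR_one)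
    then show ?thesis using u by simp
  next
    case 3
    then show ?thesis
      using antiperiodic_edge_point_strictly_one_side[OF ap kpos 3 d(2) u', of m] diff by simp
  qed
qed

lemma inj_on_interp_if_antiperiodic:
  assumes nd: "nondegenerate r" and ap: "\<forall>k. tang r (k + 3) = - tang r k"
    and kpos: "\<forall>n. kappa r n > 0"
  shows "inj_on (interp r) {real_of_int k ..< real_of_int k + 6}"
proof -
  have eq_if_floor_le: "s = s'"
    if s: "s \<in> {real_of_int k ..< real_of_int k + 6}" and s': "s' \<in> {real_of_int k ..< real_of_int k + 6}"
      and le: "\<lfloor>s\<rfloor> \<le> \<lfloor>s'\<rfloor>" and eq: "interp r s = interp r s'" for s s'
  proof -
    define m where "m = \<lfloor>s\<rfloor>"
    define d where "d = \<lfloor>s'\<rfloor> - m"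
    have "k \<le> m" "\<lfloor>s'\<rfloor> < k + 6"
      using s s' by (simp_all add: m_def le_floor_iff floor_less_iff)
    then have d: "0 \<le> d" "d \<le> 5"
      using le by (simp_all add: d_def m_def)
    have floor': "\<lfloor>s'\<rfloor> = m + d"
      by (simp add: d_def)
    have u: "0 \<le> s - m" "s - m < 1"
      unfolding m_def by linarith+
    have u': "0 \<le> s' - (m + d)" "s' - (m + d) < 1"
      using of_int_floor_le[of s'] real_of_int_floor_add_one_gt[of s'] by (simp_all add: floor')
    have "interp r s = r m + (s - m) *\<^sub>R tang r m"
      "interp r s' = r (m + d) + (s' - (m + d)) *\<^sub>R tang r (m + d)"
      by (simp_all add: interp_def tang_def m_def floor')
    with eq have "d = 0 \<and> s - m = s' - (m + d)"
      using antiperiodic_edge_points_eq[OF nd ap kpos d u u'] by simp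
    then show ?thesis by simp
  qed
  show ?thesis
    unfolding inj_on_def
    using eq_if_floor_le by (metis linorder_le_cases)
qed

lemma convex_curve_if_antiperiodic:
  assumes ap: "\<forall>k. tang r (k + 3) = - tang r k" and kpos: "\<forall>n. kappa r n > 0"
  shows "convex_curve r"
  unfolding convex_curve_def
proof
  fix k
  define P where "P = det2 (tang r k) (tang r (k + 1))"
  have same_sign: "0 \<le> P * det2 (tang r k) (r j - r k)" for j
  proof -
    define d where "d = (j - k) mod 6"
    have "r j = r (k + d + 6 * ((j - k) div 6))"
      by (simp add: d_def algebra_simps)
    moreover have "\<forall>k. r (k + 6) = r k"
      using antiperiodic_vertices(5)[OF ap] by blast
    ultimately have j: "r j = r (k + d)"
      using periodic_mult by metis
    have "0 \<le> d" "d < 6" by (simp_all add: d_def)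
    then consider "d = 0" | "d = 1" | "2 \<le> d \<and> d \<le> 5" by linarith
    then show ?thesis
    proof cases
      case 3
      then show ?thesis
        using antiperiodic_edge_point_strictly_one_side[OF ap kpos, of d 0 k] j
        by (simp add: P_def)
    qed (simp_all add: j curve_add_one)
  qed
  have "P \<noteq> 0"
    using kpos[rule_format, of k] by (auto simp: kappa_pos_iff P_def)
  then show "(\<forall>j. det2 (tang r k) (r j - r k) \<ge> 0) \<or> (\<forall>j. det2 (tang r k) (r j - r k) \<le> 0)"
    using same_sign by (metis linorder_neq_iff zero_le_mult_iff not_le)
qed

theorem lemma7p11:
  fixes r :: curve
  assumes "nondegenerate r"
    and "\<forall>n. kappa r (n + 6) = kappa r n"
    and "\<forall>n. kappabar r (n + 6) = kappabar r n"
  shows "(closed_period r 6 \<and> simple_closed r 6 \<and> convex_curve r \<and>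
          (\<forall>k. tang r (k + 3) = - tang r k))
     \<longleftrightarrow> (\<forall>n. kappa r n > 0 \<and> kappa r n = kappa r (n + 3) \<and>
              kappa r n = 1 / kappabar r (n + 1) \<and> kappa r n = 1 / kappabar r (n + 4) \<and>
              kappa r n * kappa r (n + 1) * kappa r (n + 2) = 1)"
    (is "?hexagon \<longleftrightarrow> (\<forall>n. ?conditions n)")
proof
  note nd = assms(1)
  assume ?hexagon
  then have ap: "\<forall>k. tang r (k + 3) = - tang r k" and "convex_curve r" by blast+
  note kappa3 = kappa_conditions_if_antiperiodic[OF nd ap]
  have inverse: "kappa r n = 1 / kappabar r (n + 1)" for n
    using kappa3(2)[of n] kappa_nonzero[OF nd, of n] by (auto simp: eq_divide_eq)
  show "\<forall>n. ?conditions n"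
    using kappa_pos_if_convex_curve[OF nd \<open>convex_curve r\<close>] kappa3(1,3) inverse
      inverse[of "_ + 3"] by (simp add: add.assoc)
next
  note nd = assms(1)
  assume conditions: "\<forall>n. ?conditions n"
  then have kpos: "\<forall>n. kappa r n > 0" by blast
  have ap: "\<forall>k. tang r (k + 3) = - tang r k"
    using antiperiodic_if_kappa_conditions[OF nd] conditions by blast
  show ?hexagon
    unfolding simple_closed_def
    using ap closed_period_6_if_antiperiodic[OF nd ap kpos] inj_on_interp_if_antiperiodic[OF nd ap kpos]
      convex_curve_if_antiperiodic[OF ap kpos] by simp
qed

end
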